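(* Let $\alpha\in(0,1/2)$ be irrational and let $q_k$ ($k\ge0$) be a denominator of a convergent of $\alpha$. Then there exists a factor of slope $\alpha$ whose minimum abelian period equals $q_k$.
   Context: Write $\alpha=[0;a_1,a_2,\ldots]$ with positive integers $a_i$ (so $a_1\ge2$); $q_{-1}=0$, $q_0=1$, $q_1=a_1$, $q_k=a_kq_{k-1}+q_{k-2}$ for $k\ge2$. Sturmian words: identify the circle $\mathbb{T}$ with $[0,1)$, let $R(\rho)=\{\rho+\alpha\}$, and fix one of the conventions $I_0=[0,1-\alpha)$, $I_1=[1-\alpha,1)$ or $I_0=(0,1-\alpha]$, $I_1=(1-\alpha,1]$. The Sturmian word $\mathbf{s}_{\rho,\alpha}$ has $n$-th letter $0$ if $R^n(\rho)\in I_0$ and $1$ otherwise. All these words have the same set $\mathcal{L}_\alpha$ of finite factors, the factors of slope $\alpha$. Abelian periods: the Parikh vector of a binary word $u$ is $(|u|_0,|u|_1)$; $P$ is contained in $Q$ if $P\le Q$ componentwise and $P\ne Q$. An abelian decomposition of $w$ is $w=u_0u_1\cdots u_{n-1}u_n$, $n\ge2$, with $u_1,\dots,u_{n-1}$ having a common Parikh vector $P$ and the Parikh vectors of $u_0,u_n$ contained in $P$; the common length of $u_1,\ldots,u_{n-1}$ is an abelian period; the minimum abelian period is the least one. *)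

theory Defs
  imports Complex_Main
begin

(* Continued fraction of alpha in (0,1): alpha = [0; a_1, a_2, ...].
   cf_rem alpha 0 = alpha, cf_rem alpha (k+1) = frac (1 / cf_rem alpha k) (Gauss map);
   a_k = floor (1 / cf_rem alpha (k-1)) for k >= 1. *)
fun cf_rem :: "real \<Rightarrow> nat \<Rightarrow> real" where
  "cf_rem \<alpha> 0 = \<alpha>"
| "cf_rem \<alpha> (Suc k) = frac (1 / cf_rem \<alpha> k)"

definition cf_quot :: "real \<Rightarrow> nat \<Rightarrow> nat" where
  "cf_quot \<alpha> k = nat \<lfloor>1 / cf_rem \<alpha> (k - 1)\<rfloor>"

fun cf_den :: "real \<Rightarrow> nat \<Rightarrow> nat" where
  "cf_den \<alpha> 0 = 1"
| "cf_den \<alpha> (Suc 0) = cf_quot \<alpha> 1"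
| "cf_den \<alpha> (Suc (Suc k)) = cf_quot \<alpha> (k + 2) * cf_den \<alpha> (Suc k) + cf_den \<alpha> k"

(* Sturmian word s_{rho,alpha} with convention I_0 = [0, 1-alpha), I_1 = [1-alpha, 1) *)
definition sturmian :: "real \<Rightarrow> real \<Rightarrow> nat \<Rightarrow> nat" where
  "sturmian \<alpha> \<rho> n = (if frac (\<rho> + real n * \<alpha>) < 1 - \<alpha> then 0 else 1)"

definition factors_of_slope :: "real \<Rightarrow> nat list set" where
  "factors_of_slope \<alpha> =
     {w. \<exists>\<rho> i. w = map (sturmian \<alpha> \<rho>) [i..<i + length w]}"

definition parikh :: "nat list \<Rightarrow> nat \<times> nat" where
  "parikh u = (count_list u 0, count_list u 1)"

definition parikh_contained :: "nat \<times> nat \<Rightarrow> nat \<times> nat \<Rightarrow> bool" where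
  "parikh_contained P Q \<longleftrightarrow> fst P \<le> fst Q \<and> snd P \<le> snd Q \<and> P \<noteq> Q"

definition abelian_period :: "nat list \<Rightarrow> nat \<Rightarrow> bool" where
  "abelian_period w p \<longleftrightarrow>
     (\<exists>us P. length us \<ge> 3 \<and> concat us = w \<and>
        (\<forall>i. 0 < i \<and> i < length us - 1 \<longrightarrow> parikh (us ! i) = P \<and> length (us ! i) = p) \<and>
        parikh_contained (parikh (us ! 0)) P \<and>
        parikh_contained (parikh (us ! (length us - 1))) P)"

definition min_abelian_period :: "nat list \<Rightarrow> nat \<Rightarrow> bool" where
  "min_abelian_period w p \<longleftrightarrow> abelian_period w p \<and> (\<forall>p'. abelian_period w p' \<longrightarrow> p \<le> p')"

end

theory Submission
  imports Defs
begin

(* Let k >= 1, q = q_k and K = q_{k+1}; for k = 0 a single letter does the job.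
   Since K |q alpha - p_k| < 1, the phase rho can be chosen with floor (rho + m q alpha) = m p_k
   for all m <= K. Then the K consecutive blocks of length q of s_{rho,alpha} starting at 0 all
   contain p_k ones, and deleting the first and the last letter of their concatenation leaves a
   factor w of length K q - 2 with abelian period q (alpha < 1/2 ensures K >= 3 blocks).
   Conversely, if w had an abelian period 0 < p < q with M full blocks of c ones each, then
   balance gives M |p alpha - c| < 1, while counting lengths gives M >= K; but by best
   approximation |p alpha - c| >= |q_{k-1} alpha - p_{k-1}| > 1 / K. *)

section \<open>Continued fractions\<close>

fun cf_num :: "real \<Rightarrow> nat \<Rightarrow> nat" where
  "cf_num \<alpha> 0 = 0"
| "cf_num \<alpha> (Suc 0) = 1"
| "cf_num \<alpha> (Suc (Suc k)) = cf_quot \<alpha> (k + 2) * cf_num \<alpha> (Suc k) + cf_num \<alpha> k"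

definition cf_err :: "real \<Rightarrow> nat \<Rightarrow> real" where
  "cf_err \<alpha> k = real (cf_den \<alpha> k) * \<alpha> - real (cf_num \<alpha> k)"

lemma cf_det:
  "int (cf_den \<alpha> k) * int (cf_num \<alpha> (Suc k)) - int (cf_den \<alpha> (Suc k)) * int (cf_num \<alpha> k)
     = (-1) ^ k"
  by (induction k) (simp_all add: algebra_simps)

lemma frac_not_Rats: "x \<notin> \<rat> \<Longrightarrow> frac x \<notin> \<rat>"
  using Rats_add[OF _ Rats_of_int, of "frac x" "\<lfloor>x\<rfloor>"] by (auto simp: frac_def)

lemma exists_offset_in_unit_interval:
  assumes "real K * \<bar>e\<bar> < 1"
  shows "\<exists>\<rho>. \<forall>m \<le> K. 0 \<le> \<rho> + real m * e \<and> \<rho> + real m * e < 1"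
proof (intro exI allI impI)
  fix m assume "m \<le> K"
  then have "real m * \<bar>e\<bar> \<le> real K * \<bar>e\<bar>"
    by (simp add: mult_right_mono)
  moreover have "0 \<le> real m * \<bar>e\<bar>"
    by simp
  ultimately show "0 \<le> (if 0 \<le> e then 0 else real K * \<bar>e\<bar>) + real m * e
    \<and> (if 0 \<le> e then 0 else real K * \<bar>e\<bar>) + real m * e < 1"
    using assms by (cases "0 \<le> e") (simp_all add: abs_if)
qed

lemma int_combination_coeffs_opposite_signs:
  fixes a b q0 q1 p :: int
  assumes "p = a * q0 + b * q1" and "0 < q0" and "0 < p" and "p < q1"
  shows "a \<noteq> 0 \<and> a * b \<le> 0"
proof
  show "a \<noteq> 0"
  proof
    assume "a = 0"
    then have "p = b * q1"
      using assms(1) by simp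
    show False
    proof (cases "b \<le> 0")
      case True
      then have "b * q1 \<le> 0"
        using assms(3,4) by (simp add: mult_nonpos_nonneg)
      then show False
        using \<open>p = b * q1\<close> assms(3) by linarith
    next
      case False
      then have "q1 \<le> b * q1"
        using assms(3,4) by simp
      then show False
        using \<open>p = b * q1\<close> assms(4) by linarith
    qed
  qed
  show "a * b \<le> 0"
  proof (rule ccontr)
    assume "\<not> a * b \<le> 0"
    then have "(0 < a \<and> 0 < b) \<or> (a < 0 \<and> b < 0)"
      by (metis not_le zero_less_mult_iff)
    then show False
    proof
      assume "0 < a \<and> 0 < b"
      then have "0 < a * q0" and "q1 \<le> b * q1"
        using assms(2-4) by simp_all
      then show False
        using assms(1,4) by linarith
    next
      assume "a < 0 \<and> b < 0"
      then have "a * q0 < 0" and "b * q1 < 0"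
        using assms(2-4) by (simp_all add: mult_neg_pos)
      then show False
        using assms(1,3) by linarith
    qed
  qed
qed

lemma one_le_abs_of_int_diff_mult:
  fixes a b :: int and x :: real
  assumes "a \<noteq> 0" and "a * b \<le> 0" and "0 < x"
  shows "1 \<le> \<bar>of_int a - of_int b * x\<bar>"
proof (cases "0 < a")
  case True
  then have "of_int b * x \<le> 0" and "1 \<le> real_of_int a"
    using assms(2,3) by (simp_all add: mult_le_0_iff)
  then show ?thesis
    by linarith
next
  case False
  then have "a < 0" and "0 \<le> b"
    using assms(1,2) by (auto simp: mult_le_0_iff)
  then have "0 \<le> of_int b * x" and "real_of_int a \<le> -1"
    using assms(3) by simp_all
  then show ?thesis
    by linarith
qed

declare cf_rem.simps(2) [simp del]

locale cf_irrational =
  fixes \<alpha> :: real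
  assumes pos: "0 < \<alpha>" and less_one: "\<alpha> < 1" and irrational: "\<alpha> \<notin> \<rat>"
begin

lemma cf_rem_bounds: "0 < cf_rem \<alpha> j \<and> cf_rem \<alpha> j < 1 \<and> cf_rem \<alpha> j \<notin> \<rat>"
proof (induction j)
  case 0
  then show ?case
    using pos less_one irrational by simp
next
  case (Suc j)
  then have "1 / cf_rem \<alpha> j \<notin> \<rat>"
    using Rats_divide[OF Rats_1, of "1 / cf_rem \<alpha> j"] by auto
  then have "frac (1 / cf_rem \<alpha> j) \<notin> \<rat>"
    by (rule frac_not_Rats)
  moreover from this have "frac (1 / cf_rem \<alpha> j) \<noteq> 0"
    by (metis Rats_0)
  ultimately show ?case
    using frac_ge_0 frac_lt_1 by (simp add: cf_rem.simps(2) order_less_le)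
qed

lemma cf_rem_pos: "0 < cf_rem \<alpha> j"
  and cf_rem_less_1: "cf_rem \<alpha> j < 1"
  using cf_rem_bounds by auto

lemma one_le_floor_inverse_cf_rem: "1 \<le> \<lfloor>1 / cf_rem \<alpha> j\<rfloor>"
proof -
  have "1 \<le> 1 / cf_rem \<alpha> j"
    using cf_rem_pos[of j] cf_rem_less_1[of j] by simp
  then show ?thesis
    by (simp add: le_floor_iff)
qed

lemma inverse_cf_rem: "1 / cf_rem \<alpha> j = real (cf_quot \<alpha> (Suc j)) + cf_rem \<alpha> (Suc j)"
proof -
  have "0 \<le> \<lfloor>1 / cf_rem \<alpha> j\<rfloor>"
    using one_le_floor_inverse_cf_rem[of j] by linarith
  then show ?thesis
    by (simp add: cf_quot_def cf_rem.simps(2) frac_def)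
qed

lemma cf_quot_pos: "0 < cf_quot \<alpha> (Suc j)"
  using one_le_floor_inverse_cf_rem[of j] by (simp add: cf_quot_def)

lemma cf_den_Suc_Suc_ge: "cf_den \<alpha> (Suc j) + cf_den \<alpha> j \<le> cf_den \<alpha> (Suc (Suc j))"
  using cf_quot_pos[of "Suc j"] by simp

lemma mono_cf_den: "mono (cf_den \<alpha>)"
proof (rule mono_iff_le_Suc[THEN iffD2], intro allI)
  show "cf_den \<alpha> j \<le> cf_den \<alpha> (Suc j)" for j
  proof (cases j)
    case 0
    then show ?thesis
      using cf_quot_pos[of 0] by simp
  next
    case (Suc i)
    then show ?thesis
      unfolding Suc using cf_den_Suc_Suc_ge[of i] by linarith
  qed
qed

lemma cf_den_pos: "0 < cf_den \<alpha> j"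
  using monoD[OF mono_cf_den, of 0 j] by simp

lemma three_le_cf_den:
  assumes "\<alpha> < 1 / 2"
  shows "3 \<le> cf_den \<alpha> (Suc (Suc j))"
proof -
  have "2 \<le> \<lfloor>1 / \<alpha>\<rfloor>"
    using assms pos by (simp add: le_floor_iff field_simps)
  then have "nat 2 \<le> nat \<lfloor>1 / \<alpha>\<rfloor>"
    by (rule nat_mono)
  then have "2 \<le> cf_den \<alpha> 1"
    by (simp add: cf_quot_def)
  also have "\<dots> \<le> cf_den \<alpha> (Suc j)"
    using monoD[OF mono_cf_den, of 1 "Suc j"] by simp
  finally show ?thesis
    using cf_den_Suc_Suc_ge[of j] cf_den_pos[of j] by linarith
qed

lemma cf_err_Suc: "cf_err \<alpha> (Suc j) = - cf_rem \<alpha> (Suc j) * cf_err \<alpha> j"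
proof (induction j)
  case 0
  show ?case
    using inverse_cf_rem[of 0] pos by (simp add: cf_err_def field_simps)
next
  case (Suc j)
  have "cf_err \<alpha> j = - cf_err \<alpha> (Suc j) * (1 / cf_rem \<alpha> (Suc j))"
    using Suc cf_rem_pos[of "Suc j"] by (simp add: field_simps)
  then show ?case
    unfolding inverse_cf_rem by (simp add: cf_err_def algebra_simps)
qed

lemma cf_err_mult_eq:
  "cf_err \<alpha> j * (real (cf_den \<alpha> (Suc j)) + real (cf_den \<alpha> j) * cf_rem \<alpha> (Suc j)) = (-1) ^ j"
proof -
  have "real (cf_den \<alpha> (Suc j)) * cf_err \<alpha> j - real (cf_den \<alpha> j) * cf_err \<alpha> (Suc j) = (-1) ^ j"
    using arg_cong[OF cf_det[of \<alpha> j], of real_of_int] by (simp add: cf_err_def algebra_simps)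
  then show ?thesis
    by (simp add: cf_err_Suc algebra_simps)
qed

lemma abs_cf_err_mult_eq:
  "\<bar>cf_err \<alpha> j\<bar> * real (cf_den \<alpha> (Suc j))
     + \<bar>cf_err \<alpha> j\<bar> * (real (cf_den \<alpha> j) * cf_rem \<alpha> (Suc j)) = 1"
proof -
  have "0 \<le> real (cf_den \<alpha> (Suc j)) + real (cf_den \<alpha> j) * cf_rem \<alpha> (Suc j)"
    using cf_rem_pos[of "Suc j"] by simp
  then have "\<bar>cf_err \<alpha> j\<bar> * (real (cf_den \<alpha> (Suc j)) + real (cf_den \<alpha> j) * cf_rem \<alpha> (Suc j)) = 1"
    using arg_cong[OF cf_err_mult_eq[of j], of abs] by (simp only: abs_mult abs_of_nonneg) simp
  then show ?thesis
    by (simp only: distrib_left)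
qed

lemma cf_err_nonzero: "cf_err \<alpha> j \<noteq> 0"
  using abs_cf_err_mult_eq[of j] by auto

lemma cf_den_Suc_mult_err_less_1: "real (cf_den \<alpha> (Suc j)) * \<bar>cf_err \<alpha> j\<bar> < 1"
proof -
  have "0 < \<bar>cf_err \<alpha> j\<bar> * (real (cf_den \<alpha> j) * cf_rem \<alpha> (Suc j))"
    using cf_err_nonzero[of j] cf_den_pos[of j] cf_rem_pos[of "Suc j"] by simp
  then show ?thesis
    using abs_cf_err_mult_eq[of j] by (simp add: mult.commute)
qed

lemma one_less_cf_den_Suc_Suc_mult_err: "1 < real (cf_den \<alpha> (Suc (Suc j))) * \<bar>cf_err \<alpha> j\<bar>"
proof -
  have "real (cf_den \<alpha> j) * cf_rem \<alpha> (Suc j) < real (cf_den \<alpha> j)"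
    using cf_den_pos[of j] cf_rem_less_1[of "Suc j"] by simp
  then have "\<bar>cf_err \<alpha> j\<bar> * (real (cf_den \<alpha> j) * cf_rem \<alpha> (Suc j))
      < \<bar>cf_err \<alpha> j\<bar> * real (cf_den \<alpha> j)"
    using cf_err_nonzero[of j] by simp
  moreover have "\<bar>cf_err \<alpha> j\<bar> * (real (cf_den \<alpha> (Suc j)) + real (cf_den \<alpha> j))
      \<le> \<bar>cf_err \<alpha> j\<bar> * real (cf_den \<alpha> (Suc (Suc j)))"
    using cf_den_Suc_Suc_ge[of j] by (intro mult_left_mono) linarith+
  ultimately show ?thesis
    using abs_cf_err_mult_eq[of j] by (simp add: distrib_left mult.commute)
qed

lemma cf_best_approx:
  assumes "0 < p" and "p < cf_den \<alpha> (Suc j)"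
  shows "\<bar>cf_err \<alpha> j\<bar> \<le> \<bar>real p * \<alpha> - of_int r\<bar>"
proof -
  define q0 q1 n0 n1 where "q0 = int (cf_den \<alpha> j)" and "q1 = int (cf_den \<alpha> (Suc j))"
    and "n0 = int (cf_num \<alpha> j)" and "n1 = int (cf_num \<alpha> (Suc j))"
  define d :: int where "d = (-1) ^ j"
  have det: "q0 * n1 - q1 * n0 = d"
    using cf_det unfolding q0_def q1_def n0_def n1_def d_def .
  have "d * d = 1"
    by (simp add: d_def flip: power_add)
  txt \<open>Consecutive convergents form a unimodular matrix, so \<open>(p, r)\<close> is an integer
    combination of \<open>(q0, n0)\<close> and \<open>(q1, n1)\<close>.\<close>
  define a where "a = d * (int p * n1 - r * q1)"
  define b where "b = d * (r * q0 - int p * n0)"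
  have p_eq: "int p = a * q0 + b * q1" and r_eq: "r = a * n0 + b * n1"
    using \<open>d * d = 1\<close> unfolding a_def b_def det[symmetric] by algebra+
  have "real p * \<alpha> - of_int r = of_int a * cf_err \<alpha> j + of_int b * cf_err \<alpha> (Suc j)"
    using arg_cong[OF p_eq, of real_of_int] arg_cong[OF r_eq, of real_of_int]
    by (simp add: cf_err_def q0_def q1_def n0_def n1_def algebra_simps)
  also have "\<dots> = cf_err \<alpha> j * (of_int a - of_int b * cf_rem \<alpha> (Suc j))"
    by (simp add: cf_err_Suc algebra_simps)
  finally have err_eq:
    "real p * \<alpha> - of_int r = cf_err \<alpha> j * (of_int a - of_int b * cf_rem \<alpha> (Suc j))" .
  have "0 < q0" and "int p < q1"
    using cf_den_pos[of j] assms(2) by (simp_all add: q0_def q1_def)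
  then have "a \<noteq> 0 \<and> a * b \<le> 0"
    using int_combination_coeffs_opposite_signs[OF p_eq \<open>0 < q0\<close>] assms(1) by simp
  then have "1 \<le> \<bar>of_int a - of_int b * cf_rem \<alpha> (Suc j)\<bar>"
    using cf_rem_pos[of "Suc j"] by (intro one_le_abs_of_int_diff_mult) simp_all
  then show ?thesis
    unfolding err_eq abs_mult by (simp add: mult_le_cancel_left1)
qed

lemma one_less_abs_mult_approx:
  assumes "0 < p" and "p < cf_den \<alpha> (Suc j)" and "cf_den \<alpha> (Suc (Suc j)) \<le> M"
  shows "1 < \<bar>real M * (real p * \<alpha> - of_int r)\<bar>"
proof -
  have "1 < real (cf_den \<alpha> (Suc (Suc j))) * \<bar>cf_err \<alpha> j\<bar>"
    by (rule one_less_cf_den_Suc_Suc_mult_err)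
  also have "\<dots> \<le> real M * \<bar>real p * \<alpha> - of_int r\<bar>"
  proof (rule mult_mono)
    show "real (cf_den \<alpha> (Suc (Suc j))) \<le> real M"
      using assms(3) by (simp only: of_nat_le_iff)
    show "\<bar>cf_err \<alpha> j\<bar> \<le> \<bar>real p * \<alpha> - of_int r\<bar>"
      using assms(1,2) by (rule cf_best_approx)
  qed simp_all
  finally show ?thesis
    by (simp add: abs_mult)
qed

lemma exists_phase_floor_cf_den_multiples:
  "\<exists>\<rho>. \<forall>m \<le> cf_den \<alpha> (Suc k). \<lfloor>\<rho> + real (m * cf_den \<alpha> k) * \<alpha>\<rfloor> = int (m * cf_num \<alpha> k)"
proof -
  obtain \<rho> where \<rho>:
    "\<forall>m \<le> cf_den \<alpha> (Suc k). 0 \<le> \<rho> + real m * cf_err \<alpha> k \<and> \<rho> + real m * cf_err \<alpha> k < 1"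
    using exists_offset_in_unit_interval[OF cf_den_Suc_mult_err_less_1] by blast
  have "\<rho> + real (m * cf_den \<alpha> k) * \<alpha>
      = of_int (int (m * cf_num \<alpha> k)) + (\<rho> + real m * cf_err \<alpha> k)" for m
    by (simp add: cf_err_def algebra_simps)
  then show ?thesis
    using \<rho> by (intro exI[of _ \<rho>]) (simp add: floor_eq_iff)
qed

end

section \<open>Binary words and abelian periods\<close>

lemma butlast_upt: "butlast [m..<n] = [m..<n - 1]"
  by (cases n) simp_all

lemma concat_map_upt_blocks:
  "concat (map (\<lambda>m. map f [m * q..<m * q + q]) [0..<K]) = map f [0..<K * q]"
proof (induction K)
  case (Suc K)
  have upt_split: "[0..<Suc K * q] = [0..<K * q] @ [K * q..<K * q + q]"
    using upt_add_eq_append[of 0 "K * q" q] by (simp add: add.commute)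
  show ?case
    unfolding upt_split using Suc by simp
qed simp

lemma map_upt_eq_append_infix:
  assumes "map f [i..<i + n] = u @ x @ v"
  shows "x = map f [i + length u..<i + length u + length x]"
proof -
  have "length u + length x \<le> n"
    using arg_cong[OF assms, of length] by simp
  moreover have "x = take (length x) (drop (length u) (map f [i..<i + n]))"
    by (simp add: assms)
  ultimately show ?thesis
    by (simp add: drop_map take_map min_def)
qed

lemma length_eq_count_0_1: "set u \<subseteq> {0, 1} \<Longrightarrow> length u = count_list u 0 + count_list u (1::nat)"
  using sum_count_set[of u "{0, 1}"] by simp

lemma parikh_contained_iff:
  assumes "set u \<subseteq> {0, 1}" and "set v \<subseteq> {0, 1}"
  shows "parikh_contained (parikh u) (parikh v) \<longleftrightarrow>
    count_list u 0 \<le> count_list v 0 \<and> count_list u 1 \<le> count_list v 1 \<and> length u < length v"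
  using length_eq_count_0_1[OF assms(1)] length_eq_count_0_1[OF assms(2)]
  by (auto simp: parikh_contained_def parikh_def)

lemma count_list_concat_const:
  "(\<And>v. v \<in> set vs \<Longrightarrow> count_list v y = c) \<Longrightarrow> count_list (concat vs) y = length vs * c"
  by (induction vs) auto

lemma length_concat_const:
  "(\<And>v. v \<in> set vs \<Longrightarrow> length v = p) \<Longrightarrow> length (concat vs) = length vs * p"
  by (induction vs) auto

lemma hd_butlast_tl_last:
  assumes "2 \<le> length xs"
  shows "xs = hd xs # butlast (tl xs) @ [last xs]"
proof (cases xs)
  case (Cons x ys)
  then have "ys \<noteq> []"
    using assms by auto
  then show ?thesis
    using Cons by simp
qed (use assms in simp)

lemma abelian_periodE:
  assumes "abelian_period w p"
  obtains u0 vs un P where "w = u0 @ concat vs @ un" and "vs \<noteq> []"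
    and "\<forall>v \<in> set vs. parikh v = P \<and> length v = p"
    and "parikh_contained (parikh u0) P" and "parikh_contained (parikh un) P"
proof -
  obtain us P where len: "3 \<le> length us" and w: "concat us = w"
    and mid: "\<And>t. 0 < t \<and> t < length us - 1 \<Longrightarrow> parikh (us ! t) = P \<and> length (us ! t) = p"
    and first: "parikh_contained (parikh (us ! 0)) P"
    and last: "parikh_contained (parikh (us ! (length us - 1))) P"
    using assms unfolding abelian_period_def by blast
  have us: "us = hd us # butlast (tl us) @ [last us]"
    using len by (intro hd_butlast_tl_last) simp
  have "w = hd us @ concat (butlast (tl us)) @ last us"
    using w by (subst (asm) us) simp
  moreover have "parikh v = P \<and> length v = p" if v: "v \<in> set (butlast (tl us))" for v
  proof -
    obtain t where t: "t < length (butlast (tl us))" and "v = butlast (tl us) ! t"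
      using v by (auto simp: in_set_conv_nth)
    then have "v = us ! Suc t"
      by (simp add: nth_butlast nth_tl)
    then show ?thesis
      using mid[of "Suc t"] t by simp
  qed
  moreover have "0 < length (butlast (tl us))"
    using len by simp
  then have "butlast (tl us) \<noteq> []"
    unfolding length_greater_0_conv .
  moreover have "us \<noteq> []"
    using len by auto
  then have "hd us = us ! 0" and "last us = us ! (length us - 1)"
    by (simp_all add: hd_conv_nth last_conv_nth)
  ultimately show thesis
    using that first last by metis
qed

lemma abelian_periodI:
  assumes "w = u0 @ concat vs @ un" and "vs \<noteq> []"
    and vs: "\<forall>v \<in> set vs. parikh v = P \<and> length v = p"
    and "parikh_contained (parikh u0) P" and "parikh_contained (parikh un) P"
  shows "abelian_period w p"
proof -
  define us where "us = u0 # vs @ [un]"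
  have "parikh (us ! t) = P \<and> length (us ! t) = p" if "0 < t \<and> t < length us - 1" for t
    using that vs by (cases t) (auto simp: us_def nth_append)
  moreover have "3 \<le> length us" and "concat us = w"
    using assms(1,2) by (auto simp: us_def Suc_le_eq)
  ultimately show ?thesis
    unfolding abelian_period_def using assms(4,5)
    by (intro exI[of _ us] exI[of _ P]) (auto simp: us_def nth_append)
qed

lemma abelian_period_pos:
  assumes "abelian_period w p"
  shows "0 < p"
proof (rule ccontr)
  assume "\<not> 0 < p"
  obtain u0 vs un P where "w = u0 @ concat vs @ un" and "vs \<noteq> []"
    and vs: "\<forall>v \<in> set vs. parikh v = P \<and> length v = p"
    and "parikh_contained (parikh u0) P" and "parikh_contained (parikh un) P"
    using assms by (rule abelian_periodE)
  then obtain v where "v \<in> set vs"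
    by fastforce
  then have "P = (0, 0)"
    using vs \<open>\<not> 0 < p\<close> by (auto simp: parikh_def)
  then show False
    using \<open>parikh_contained (parikh u0) P\<close> by (auto simp: parikh_contained_def prod_eq_iff)
qed

lemma abelian_period_binaryE:
  assumes "abelian_period w p" and "set w \<subseteq> {0, 1}"
  obtains u0 vs un P where "w = u0 @ concat vs @ un" and "vs \<noteq> []"
    and "\<forall>v \<in> set vs. parikh v = P \<and> length v = p"
    and "length u0 < p" and "length un < p"
proof -
  obtain u0 vs un P where w: "w = u0 @ concat vs @ un" and "vs \<noteq> []"
    and vs: "\<forall>v \<in> set vs. parikh v = P \<and> length v = p"
    and u0: "parikh_contained (parikh u0) P" and un: "parikh_contained (parikh un) P"
    using assms(1) by (rule abelian_periodE)
  obtain v where "v \<in> set vs"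
    using \<open>vs \<noteq> []\<close> by fastforce
  then have "set v \<subseteq> {0, 1}" and "P = parikh v" and "length v = p"
    using vs w assms(2) by auto
  moreover have "set u0 \<subseteq> {0, 1}" and "set un \<subseteq> {0, 1}"
    using w assms(2) by auto
  ultimately have "length u0 < p" and "length un < p"
    using u0 un parikh_contained_iff by blast+
  then show thesis
    using that w \<open>vs \<noteq> []\<close> vs by blast
qed

lemma abelian_period_butlast_tl_concat:
  assumes "3 \<le> length Bs" and "0 < p"
    and Bs: "\<forall>B \<in> set Bs. parikh B = P \<and> length B = p \<and> set B \<subseteq> {0, 1}"
  shows "abelian_period (butlast (tl (concat Bs))) p"
proof -
  have Bs_eq: "Bs = hd Bs # butlast (tl Bs) @ [last Bs]"
    using assms(1) by (intro hd_butlast_tl_last) simp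
  define vs where "vs = butlast (tl Bs)"
  have "hd Bs \<in> set Bs" and "last Bs \<in> set Bs"
    using assms(1) by (auto intro!: hd_in_set last_in_set)
  then have hd: "parikh (hd Bs) = P" "length (hd Bs) = p" "set (hd Bs) \<subseteq> {0, 1}"
    and last: "parikh (last Bs) = P" "length (last Bs) = p" "set (last Bs) \<subseteq> {0, 1}"
    using Bs by auto
  obtain x u0 where x: "hd Bs = x # u0"
    using hd(2) \<open>0 < p\<close> by (cases "hd Bs") auto
  obtain un z where z: "last Bs = un @ [z]"
    using last(2) \<open>0 < p\<close> by (cases "last Bs" rule: rev_cases) auto
  have "butlast (tl (concat Bs)) = u0 @ concat vs @ un"
    by (subst Bs_eq) (simp add: x z vs_def butlast_append)
  moreover have "vs \<noteq> []"
  proof -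
    have "0 < length vs"
      using assms(1) by (simp add: vs_def)
    then show ?thesis
      unfolding length_greater_0_conv .
  qed
  moreover have "\<forall>v \<in> set vs. parikh v = P \<and> length v = p"
  proof -
    have "set vs \<subseteq> set Bs"
      using arg_cong[OF Bs_eq, of set] by (auto simp: vs_def)
    then show ?thesis
      using Bs by auto
  qed
  moreover have "parikh_contained (parikh u0) (parikh (hd Bs))"
    using hd(3) by (subst parikh_contained_iff) (auto simp: x)
  moreover have "parikh_contained (parikh un) (parikh (last Bs))"
    using last(3) by (subst parikh_contained_iff) (auto simp: z)
  ultimately show ?thesis
    unfolding hd(1) last(1) by (rule abelian_periodI)
qed

lemma min_abelian_period_singleton:
  assumes "x \<in> {0, 1}"
  shows "min_abelian_period [x] 1"
  unfolding min_abelian_period_def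
proof (intro conjI allI impI)
  show "abelian_period [x] 1"
    using abelian_period_butlast_tl_concat[of "[[x], [x], [x]]" 1 "parikh [x]"] assms by simp
  show "1 \<le> p" if "abelian_period [x] p" for p
    using abelian_period_pos[OF that] by simp
qed

section \<open>Sturmian words\<close>

lemma sturmian_binary: "set (map (sturmian \<alpha> \<rho>) ns) \<subseteq> {0, 1}"
  by (auto simp: sturmian_def)

lemma sturmian_factor_of_slope: "map (sturmian \<alpha> \<rho>) [i..<i + n] \<in> factors_of_slope \<alpha>"
  unfolding factors_of_slope_def by auto

lemma sturmian_eq_floor_diff:
  assumes "0 \<le> \<alpha>" and "\<alpha> \<le> 1"
  shows "int (sturmian \<alpha> \<rho> n) = \<lfloor>\<rho> + real (Suc n) * \<alpha>\<rfloor> - \<lfloor>\<rho> + real n * \<alpha>\<rfloor>"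
proof -
  define x where "x = \<rho> + real n * \<alpha>"
  have Suc_n: "\<rho> + real (Suc n) * \<alpha> = x + \<alpha>"
    by (simp add: x_def algebra_simps)
  have fx: "x = of_int \<lfloor>x\<rfloor> + frac x" "0 \<le> frac x" "frac x < 1"
    by (simp_all add: frac_def frac_lt_1[unfolded frac_def])
  show ?thesis
  proof (cases "frac x < 1 - \<alpha>")
    case True
    then have "\<lfloor>x + \<alpha>\<rfloor> = \<lfloor>x\<rfloor>"
      unfolding floor_eq_iff using fx assms by linarith
    then show ?thesis
      unfolding sturmian_def Suc_n x_def[symmetric] using True by simp
  next
    case False
    then have "\<lfloor>x + \<alpha>\<rfloor> = \<lfloor>x\<rfloor> + 1"
      unfolding floor_eq_iff using fx assms by linarith
    then show ?thesis
      unfolding sturmian_def Suc_n x_def[symmetric] using False by simp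
  qed
qed

lemma count_sturmian_factor:
  assumes "0 \<le> \<alpha>" and "\<alpha> \<le> 1"
  shows "int (count_list (map (sturmian \<alpha> \<rho>) [i..<i + n]) 1)
    = \<lfloor>\<rho> + real (i + n) * \<alpha>\<rfloor> - \<lfloor>\<rho> + real i * \<alpha>\<rfloor>"
proof (induction n)
  case (Suc n)
  have "count_list [sturmian \<alpha> \<rho> (i + n)] 1 = sturmian \<alpha> \<rho> (i + n)"
    by (simp add: sturmian_def)
  then show ?case
    using Suc sturmian_eq_floor_diff[OF assms, of \<rho> "i + n"] by simp
qed simp

lemma parikh_sturmian_factor:
  assumes "0 \<le> \<alpha>" and "\<alpha> \<le> 1"
    and "\<lfloor>\<rho> + real (i + n) * \<alpha>\<rfloor> - \<lfloor>\<rho> + real i * \<alpha>\<rfloor> = int c"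
  shows "parikh (map (sturmian \<alpha> \<rho>) [i..<i + n]) = (n - c, c)"
proof -
  have "count_list (map (sturmian \<alpha> \<rho>) [i..<i + n]) 1 = c"
    using count_sturmian_factor[OF assms(1,2), of \<rho> i n] assms(3) by simp
  then show ?thesis
    using length_eq_count_0_1[OF sturmian_binary, of \<alpha> \<rho> "[i..<i + n]"] by (simp add: parikh_def)
qed

lemma sturmian_factor_count_approx:
  assumes "0 \<le> \<alpha>" and "\<alpha> \<le> 1"
  shows "\<bar>real (count_list (map (sturmian \<alpha> \<rho>) [i..<i + n]) 1) - real n * \<alpha>\<bar> < 1"
proof -
  have "real (count_list (map (sturmian \<alpha> \<rho>) [i..<i + n]) 1)
      = of_int (\<lfloor>\<rho> + real (i + n) * \<alpha>\<rfloor> - \<lfloor>\<rho> + real i * \<alpha>\<rfloor>)"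
    using arg_cong[OF count_sturmian_factor[OF assms], of real_of_int] by simp
  moreover have "(\<rho> + real (i + n) * \<alpha>) - (\<rho> + real i * \<alpha>) = real n * \<alpha>"
    by (simp add: algebra_simps)
  ultimately show ?thesis
    using floor_le_iff floor_correct[of "\<rho> + real (i + n) * \<alpha>"] floor_correct[of "\<rho> + real i * \<alpha>"]
    by (simp add: abs_less_iff) linarith
qed

lemma sturmian_abelian_period_approx:
  assumes "0 \<le> \<alpha>" and "\<alpha> \<le> 1"
    and "abelian_period (map (sturmian \<alpha> \<rho>) [i..<i + L]) p"
  obtains M c where "0 < M" and "L + 2 \<le> (M + 2) * p"
    and "\<bar>real M * (real p * \<alpha> - real c)\<bar> < 1"
proof -
  obtain u0 vs un P where w: "map (sturmian \<alpha> \<rho>) [i..<i + L] = u0 @ concat vs @ un"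
    and "vs \<noteq> []" and vs: "\<forall>v \<in> set vs. parikh v = P \<and> length v = p"
    and "length u0 < p" and "length un < p"
    using abelian_period_binaryE[OF assms(3) sturmian_binary] by blast
  define M where "M = length vs"
  have len: "length (concat vs) = M * p"
    using vs by (simp add: M_def length_concat_const)
  have "count_list v 1 = snd P" if "v \<in> set vs" for v
    using vs that by (metis parikh_def snd_conv)
  then have "count_list (concat vs) 1 = M * snd P"
    by (simp add: M_def count_list_concat_const)
  moreover have "concat vs = map (sturmian \<alpha> \<rho>) [i + length u0..<i + length u0 + M * p]"
    using map_upt_eq_append_infix[OF w] len by simp
  ultimately have "\<bar>real (M * snd P) - real (M * p) * \<alpha>\<bar> < 1"
    using sturmian_factor_count_approx[OF assms(1,2), of \<rho> "i + length u0" "M * p"] by simp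
  then have "\<bar>real M * (real p * \<alpha> - real (snd P))\<bar> < 1"
    by (simp add: abs_minus_commute algebra_simps)
  moreover have "L + 2 \<le> (M + 2) * p"
    using arg_cong[OF w, of length] len \<open>length u0 < p\<close> \<open>length un < p\<close> by simp
  moreover have "0 < M"
    using \<open>vs \<noteq> []\<close> by (simp add: M_def)
  ultimately show thesis
    using that by blast
qed

section \<open>Factors with minimum abelian period \<open>q\<^sub>k\<close>\<close>

lemma le_of_mult_le_add_2_mult:
  fixes p q K M :: nat
  assumes "p < q" and "q \<le> K" and "K * q \<le> (M + 2) * p"
  shows "K \<le> M"
proof (rule ccontr)
  assume "\<not> K \<le> M"
  then have "(M + 2) * p \<le> (K + 1) * p"
    by (intro mult_le_mono1) linarith
  also have "\<dots> < K * Suc p"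
    using assms(1,2) by simp
  also have "\<dots> \<le> K * q"
    using assms(1) by (intro mult_le_mono2) simp
  finally show False
    using assms(3) by linarith
qed

context cf_irrational
begin

lemma cf_den_le_abelian_period:
  assumes "abelian_period (map (sturmian \<alpha> \<rho>) [i..<i + L]) p"
    and "cf_den \<alpha> (Suc (Suc j)) * cf_den \<alpha> (Suc j) \<le> L + 2"
  shows "cf_den \<alpha> (Suc j) \<le> p"
proof (rule ccontr)
  assume "\<not> cf_den \<alpha> (Suc j) \<le> p"
  then have "p < cf_den \<alpha> (Suc j)"
    by simp
  obtain M c where "L + 2 \<le> (M + 2) * p" and close: "\<bar>real M * (real p * \<alpha> - real c)\<bar> < 1"
    using sturmian_abelian_period_approx[OF less_imp_le[OF pos] less_imp_le[OF less_one] assms(1)]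
    by blast
  have "cf_den \<alpha> (Suc j) \<le> cf_den \<alpha> (Suc (Suc j))"
    by (rule monoD[OF mono_cf_den]) simp
  moreover have "cf_den \<alpha> (Suc (Suc j)) * cf_den \<alpha> (Suc j) \<le> (M + 2) * p"
    using assms(2) \<open>L + 2 \<le> (M + 2) * p\<close> by (rule order_trans)
  ultimately have "cf_den \<alpha> (Suc (Suc j)) \<le> M"
    using \<open>p < cf_den \<alpha> (Suc j)\<close> le_of_mult_le_add_2_mult by blast
  then have "1 < \<bar>real M * (real p * \<alpha> - of_int (int c))\<bar>"
    using abelian_period_pos[OF assms(1)] \<open>p < cf_den \<alpha> (Suc j)\<close> one_less_abs_mult_approx
    by blast
  then show False
    using close by simp
qed

lemma sturmian_abelian_period_cf_den:
  assumes "3 \<le> cf_den \<alpha> (Suc k)"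
  shows "\<exists>\<rho>. abelian_period
    (map (sturmian \<alpha> \<rho>) [1..<cf_den \<alpha> (Suc k) * cf_den \<alpha> k - 1]) (cf_den \<alpha> k)"
proof -
  define q K c where "q = cf_den \<alpha> k" and "K = cf_den \<alpha> (Suc k)" and "c = cf_num \<alpha> k"
  obtain \<rho> where \<rho>: "\<forall>m \<le> K. \<lfloor>\<rho> + real (m * q) * \<alpha>\<rfloor> = int (m * c)"
    using exists_phase_floor_cf_den_multiples[of k] unfolding q_def K_def c_def by blast
  define s where "s = sturmian \<alpha> \<rho>"
  define B where "B m = map s [m * q..<m * q + q]" for m
  have "parikh (B m) = (q - c, c) \<and> length (B m) = q \<and> set (B m) \<subseteq> {0, 1}" if "m < K" for m
  proof -
    have "Suc m \<le> K" and "m \<le> K"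
      using \<open>m < K\<close> by simp_all
    then have "\<lfloor>\<rho> + real (Suc m * q) * \<alpha>\<rfloor> = int (Suc m * c)"
      and "\<lfloor>\<rho> + real (m * q) * \<alpha>\<rfloor> = int (m * c)"
      using \<rho> by blast+
    then have "\<lfloor>\<rho> + real (m * q + q) * \<alpha>\<rfloor> - \<lfloor>\<rho> + real (m * q) * \<alpha>\<rfloor> = int c"
      by (simp add: add.commute)
    then have "parikh (B m) = (q - c, c)"
      unfolding B_def s_def using pos less_one by (intro parikh_sturmian_factor) simp_all
    moreover have "set (B m) \<subseteq> {0, 1}"
      unfolding B_def s_def by (rule sturmian_binary)
    ultimately show ?thesis
      by (simp add: B_def)
  qed
  then have "abelian_period (butlast (tl (concat (map B [0..<K])))) q"
    using assms cf_den_pos[of k]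
    by (intro abelian_period_butlast_tl_concat) (auto simp: q_def K_def)
  moreover have "butlast (tl (concat (map B [0..<K]))) = map s [1..<K * q - 1]"
    unfolding B_def concat_map_upt_blocks by (simp add: butlast_upt flip: map_tl map_butlast)
  ultimately have "abelian_period (map s [1..<K * q - 1]) q"
    by simp
  then show ?thesis
    unfolding s_def q_def K_def by blast
qed

lemma sturmian_factor_min_abelian_period_cf_den:
  assumes "3 \<le> cf_den \<alpha> (Suc (Suc j))"
  shows "\<exists>w \<in> factors_of_slope \<alpha>. min_abelian_period w (cf_den \<alpha> (Suc j))"
proof -
  define q K where "q = cf_den \<alpha> (Suc j)" and "K = cf_den \<alpha> (Suc (Suc j))"
  define L where "L = K * q - 2"
  have "3 \<le> K" and "1 \<le> q"
    using assms cf_den_pos[of "Suc j"] unfolding q_def K_def by simp_all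
  then have "3 \<le> K * q"
    using mult_le_mono[of 3 K 1 q] by simp
  then have "K * q - 1 = 1 + L" and "K * q \<le> L + 2"
    by (simp_all add: L_def)
  moreover obtain \<rho> where "abelian_period (map (sturmian \<alpha> \<rho>) [1..<K * q - 1]) q"
    using sturmian_abelian_period_cf_den[of "Suc j"] assms unfolding q_def K_def by blast
  ultimately have ap: "abelian_period (map (sturmian \<alpha> \<rho>) [1..<1 + L]) q"
    by simp
  have "q \<le> p" if "abelian_period (map (sturmian \<alpha> \<rho>) [1..<1 + L]) p" for p
    using cf_den_le_abelian_period[OF that] \<open>K * q \<le> L + 2\<close> unfolding q_def K_def by blast
  then have "min_abelian_period (map (sturmian \<alpha> \<rho>) [1..<1 + L]) q"
    unfolding min_abelian_period_def using ap by blast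
  then show ?thesis
    using sturmian_factor_of_slope[of \<alpha> \<rho> 1 L] unfolding q_def by blast
qed

end

theorem proposition5p5:
  fixes \<alpha> :: real and k :: nat
  assumes "0 < \<alpha>" and "\<alpha> < 1 / 2" and "\<alpha> \<notin> \<rat>"
  shows "\<exists>w \<in> factors_of_slope \<alpha>. min_abelian_period w (cf_den \<alpha> k)"
proof -
  interpret cf_irrational \<alpha>
    using assms by unfold_locales simp_all
  show ?thesis
  proof (cases k)
    case 0
    have "min_abelian_period [sturmian \<alpha> 0 0] 1"
      by (rule min_abelian_period_singleton) (simp add: sturmian_def)
    moreover have "[sturmian \<alpha> 0 0] \<in> factors_of_slope \<alpha>"
      using sturmian_factor_of_slope[of \<alpha> 0 0 1] by simp
    ultimately show ?thesis
      unfolding 0 cf_den.simps(1) by blast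
  next
    case (Suc j)
    then show ?thesis
      using sturmian_factor_min_abelian_period_cf_den three_le_cf_den[OF assms(2)] by blast
  qed
qed

end
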